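(* Let $F=F_2$ be the free group on $x,y$, $F^{(1)}=[F,F]$, $F^{(2)}=[F^{(1)},F^{(1)}]$, and let $w\in F^{(1)}\setminus F^{(2)}$. Then the rational functions $\Phi_w(\lambda,\mu)$ and $\Psi_w(\lambda,\mu)$ defined below are both nonzero and are linearly independent (over $\mathbb{C}$).
   Context: Write $[a,b]=aba^{-1}b^{-1}$ and $w_{n,m}=[x^n,y^m]$ for nonzero integers $n,m$. The elements $w_{n,m}$ ($n,m\neq 0$) freely generate $F^{(1)}$, so every $w\in F^{(1)}$ has a unique shortest (reduced) expression $w=\prod_{i=1}^r w_{n_i,m_i}^{s_i}$ with $s_i\neq 0$. Let $\mathrm{Supp}(w)$ be the set of pairs $(n,m)$ for which $w_{n,m}$ occurs in this expression, and $R_w(n,m)$ the sum of the exponents $s_i$ over all occurrences of $w_{n,m}$. Define $$\Phi_w(\lambda,\mu)=\sum_{(\alpha,\beta)\in \mathrm{Supp}(w)} R_w(\alpha,\beta)\,\mathrm{sgn}(\alpha)\,(1-\mu^{2\beta})\,\frac{(\lambda^{2|\alpha|}-1)\lambda^{\alpha}}{\lambda^{|\alpha|-1}(\lambda^2-1)},$$ $$\Psi_w(\lambda,\mu)=\sum_{(\alpha,\beta)\in \mathrm{Supp}(w)} R_w(\alpha,\beta)\,\mathrm{sgn}(\beta)\,(\lambda^{2\alpha}-1)\,\frac{(\mu^{2|\beta|}-1)\mu^{\beta}}{\mu^{|\beta|-1}(\mu^2-1)}.$$ *)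

theory Defs
  imports Complex_Main "HOL-Algebra.Algebra"
begin

text \<open>A letter is a pair (g, e): g = False means generator x, g = True means y;
  e = True means the inverse of the generator.\<close>
type_synonym letter = "bool \<times> bool"

definition inv_letter :: "letter \<Rightarrow> letter" where
  "inv_letter a = (fst a, \<not> snd a)"

fun reduced_word :: "letter list \<Rightarrow> bool" where
  "reduced_word (a # b # xs) = (b \<noteq> inv_letter a \<and> reduced_word (b # xs))"
| "reduced_word _ = True"

fun push_letter :: "letter \<Rightarrow> letter list \<Rightarrow> letter list" where
  "push_letter a [] = [a]"
| "push_letter a (b # xs) = (if b = inv_letter a then xs else a # b # xs)"

definition normalize :: "letter list \<Rightarrow> letter list" where
  "normalize xs = foldr push_letter xs []"

definition F2 :: "letter list monoid" where
  "F2 = \<lparr> carrier = {w. reduced_word w}, monoid.mult = (\<lambda>u v. normalize (u @ v)), one = [] \<rparr>"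

definition gen_x :: "letter list" where "gen_x = [(False, False)]"
definition gen_y :: "letter list" where "gen_y = [(True, False)]"

text \<open>Commutator [a,b] = a b a^-1 b^-1 (same convention as HOL-Algebra's derived_set).\<close>
definition comm :: "letter list \<Rightarrow> letter list \<Rightarrow> letter list" where
  "comm a b = a \<otimes>\<^bsub>F2\<^esub> b \<otimes>\<^bsub>F2\<^esub> inv\<^bsub>F2\<^esub> a \<otimes>\<^bsub>F2\<^esub> inv\<^bsub>F2\<^esub> b"

definition F_1 :: "letter list set" where "F_1 = derived F2 (carrier F2)"
definition F_2' :: "letter list set" where "F_2' = derived F2 F_1"

definition wnm :: "int \<Rightarrow> int \<Rightarrow> letter list" where
  "wnm n m = comm (gen_x [^]\<^bsub>F2\<^esub> n) (gen_y [^]\<^bsub>F2\<^esub> m)"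

text \<open>An expression is a list of ((n_i, m_i), s_i), standing for prod_i w_{n_i,m_i}^{s_i}.\<close>
type_synonym expr = "((int \<times> int) \<times> int) list"

definition eval_expr :: "expr \<Rightarrow> letter list" where
  "eval_expr es = foldr (\<lambda>((n, m), s) acc. (wnm n m [^]\<^bsub>F2\<^esub> s) \<otimes>\<^bsub>F2\<^esub> acc) es \<one>\<^bsub>F2\<^esub>"

fun no_adjacent_repeat :: "expr \<Rightarrow> bool" where
  "no_adjacent_repeat (a # b # xs) = (fst a \<noteq> fst b \<and> no_adjacent_repeat (b # xs))"
| "no_adjacent_repeat _ = True"

definition reduced_expr :: "expr \<Rightarrow> bool" where
  "reduced_expr es \<longleftrightarrow>
     (\<forall>((n, m), s) \<in> set es. n \<noteq> 0 \<and> m \<noteq> 0 \<and> s \<noteq> 0) \<and> no_adjacent_repeat es"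

definition red_expr_of :: "letter list \<Rightarrow> expr" where
  "red_expr_of w = (THE es. reduced_expr es \<and> eval_expr es = w)"

definition Supp :: "letter list \<Rightarrow> (int \<times> int) set" where
  "Supp w = fst ` set (red_expr_of w)"

definition R :: "letter list \<Rightarrow> int \<times> int \<Rightarrow> int" where
  "R w p = sum_list (map snd (filter (\<lambda>e. fst e = p) (red_expr_of w)))"

definition Phi :: "letter list \<Rightarrow> complex \<Rightarrow> complex \<Rightarrow> complex" where
  "Phi w la mu = (\<Sum>(\<alpha>, \<beta>) \<in> Supp w.
      of_int (R w (\<alpha>, \<beta>)) * of_int (sgn \<alpha>) * (1 - mu powi (2 * \<beta>)) *
      ((la ^ (2 * nat \<bar>\<alpha>\<bar>) - 1) * la powi \<alpha>) / (la ^ (nat \<bar>\<alpha>\<bar> - 1) * (la\<^sup>2 - 1)))"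

definition Psi :: "letter list \<Rightarrow> complex \<Rightarrow> complex \<Rightarrow> complex" where
  "Psi w la mu = (\<Sum>(\<alpha>, \<beta>) \<in> Supp w.
      of_int (R w (\<alpha>, \<beta>)) * of_int (sgn \<beta>) * (la powi (2 * \<alpha>) - 1) *
      ((mu ^ (2 * nat \<bar>\<beta>\<bar>) - 1) * mu powi \<beta>) / (mu ^ (nat \<bar>\<beta>\<bar> - 1) * (mu\<^sup>2 - 1)))"

text \<open>Points where all denominators are defined and nonzero; a rational function in
  (lambda, mu) is zero iff it vanishes on this Zariski-dense open set.\<close>
definition good_pt :: "complex \<Rightarrow> complex \<Rightarrow> bool" where
  "good_pt la mu \<longleftrightarrow> la \<noteq> 0 \<and> la\<^sup>2 \<noteq> 1 \<and> mu \<noteq> 0 \<and> mu\<^sup>2 \<noteq> 1"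

end

theory Submission
  imports Defs "HOL-Library.Product_Plus"
begin

text \<open>Every \<open>w \<in> F\<^sup>(\<^sup>1\<^sup>)\<close> lies in the kernel of the abelianization \<open>F \<rightarrow> \<int>\<^sup>2\<close>. Reading a word as a
  lattice path and labelling its \<open>x\<close>-edges (Reidemeister--Schreier) maps this kernel
  homomorphically into the free group on \<open>\<int>\<^sup>2\<close>, sending \<open>w\<^sub>n\<^sub>,\<^sub>m\<close> to a single generator; hence
  reduced expressions in the \<open>w\<^sub>n\<^sub>,\<^sub>m\<close> are unique, so \<open>R\<^sub>w\<close> is well defined. If all exponent sums
  \<open>R\<^sub>w(\<alpha>,\<beta>)\<close> vanished, the factors of \<open>w\<close> could be regrouped modulo commutators of elements of
  \<open>F\<^sup>(\<^sup>1\<^sup>)\<close>, giving \<open>w \<in> F\<^sup>(\<^sup>2\<^sup>)\<close>.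

  Termwise, \<open>\<Phi>\<^sub>w = -\<lambda>/(\<lambda>\<^sup>2-1) \<cdot> G\<^sub>w(\<lambda>\<^sup>2,\<mu>\<^sup>2)\<close> and \<open>\<Psi>\<^sub>w = \<mu>/(\<mu>\<^sup>2-1) \<cdot> G\<^sub>w(\<lambda>\<^sup>2,\<mu>\<^sup>2)\<close> with the Laurent
  polynomial \<open>G\<^sub>w(u,v) = \<Sum> R\<^sub>w(\<alpha>,\<beta>) (u\<^sup>\<alpha> - 1)(v\<^sup>\<beta> - 1)\<close>, whose coefficient of \<open>u\<^sup>\<alpha>v\<^sup>\<beta>\<close> (\<open>\<alpha>,\<beta> \<noteq> 0\<close>) is
  \<open>R\<^sub>w(\<alpha>,\<beta>)\<close>. So \<open>G\<^sub>w \<noteq> 0\<close>, both functions are nonzero, and since \<open>\<Phi>\<^sub>w\<close> is odd and \<open>\<Psi>\<^sub>w\<close> even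
  in \<open>\<lambda>\<close>, they are linearly independent.\<close>

section \<open>The free group on reduced words over an arbitrary alphabet\<close>

definition inv1 :: "'a \<times> bool \<Rightarrow> 'a \<times> bool" where
  "inv1 a = (fst a, \<not> snd a)"

lemma inv1_inv1 [simp]: "inv1 (inv1 a) = a"
  by (simp add: inv1_def)

lemma inv1_neq [simp]: "inv1 a \<noteq> a" "a \<noteq> inv1 a"
  by (auto simp: inv1_def prod_eq_iff)

lemma fst_inv1 [simp]: "fst (inv1 a) = fst a"
  by (simp add: inv1_def)

lemma eq_inv1_iff: "b = inv1 a \<longleftrightarrow> a = inv1 b"
  by auto

fun reduced :: "('a \<times> bool) list \<Rightarrow> bool" where
  "reduced (a # b # xs) = (b \<noteq> inv1 a \<and> reduced (b # xs))"
| "reduced _ = True"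

fun push1 :: "'a \<times> bool \<Rightarrow> ('a \<times> bool) list \<Rightarrow> ('a \<times> bool) list" where
  "push1 a [] = [a]"
| "push1 a (b # xs) = (if b = inv1 a then xs else a # b # xs)"

abbreviation push_all :: "('a \<times> bool) list \<Rightarrow> ('a \<times> bool) list \<Rightarrow> ('a \<times> bool) list" where
  "push_all u w \<equiv> foldr push1 u w"

definition reduce :: "('a \<times> bool) list \<Rightarrow> ('a \<times> bool) list" where
  "reduce xs = push_all xs []"

definition inv_word :: "('a \<times> bool) list \<Rightarrow> ('a \<times> bool) list" where
  "inv_word u = rev (map inv1 u)"

definition free_grp :: "('a \<times> bool) list monoid" where
  "free_grp = \<lparr> carrier = {w. reduced w}, monoid.mult = (\<lambda>u v. reduce (u @ v)), one = [] \<rparr>"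

lemma reduced_Cons: "reduced (a # u) \<longleftrightarrow> reduced u \<and> (u = [] \<or> hd u \<noteq> inv1 a)"
  by (cases u) auto

lemma reduced_append:
  "reduced (u @ v) \<longleftrightarrow> reduced u \<and> reduced v \<and> (u = [] \<or> v = [] \<or> hd v \<noteq> inv1 (last u))"
  by (induction u) (auto simp: reduced_Cons)

lemma reduced_replicate: "reduced (replicate n a)"
  by (induction n) (auto simp: reduced_Cons)

lemma reduced_inv_word [simp]: "reduced (inv_word u) \<longleftrightarrow> reduced u"
proof (induction u)
  case (Cons a u)
  then show ?case
    by (cases u) (auto simp: inv_word_def reduced_append eq_inv1_iff last_rev)
qed (simp add: inv_word_def)

lemma inv_word_inv_word [simp]: "inv_word (inv_word u) = u"
  by (simp add: inv_word_def rev_map comp_def)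

lemma inv_word_Nil [simp]: "inv_word [] = []"
  by (simp add: inv_word_def)

lemma inv_word_append: "inv_word (u @ v) = inv_word v @ inv_word u"
  by (simp add: inv_word_def)

lemma inv_word_replicate: "inv_word (replicate n a) = replicate n (inv1 a)"
  by (simp add: inv_word_def)

lemma reduced_push1: "reduced w \<Longrightarrow> reduced (push1 a w)"
  by (cases w rule: reduced.cases) (auto simp: eq_inv1_iff)

lemma reduced_push_all: "reduced w \<Longrightarrow> reduced (push_all u w)"
  by (induction u) (auto simp: reduced_push1)

lemma reduced_reduce: "reduced (reduce xs)"
  by (simp add: reduce_def reduced_push_all)

lemma push1_reduced: "reduced (a # w) \<Longrightarrow> push1 a w = a # w"
  by (cases w) (auto simp: eq_inv1_iff)

lemma push_all_reduced: "reduced (u @ w) \<Longrightarrow> push_all u w = u @ w"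
  by (induction u) (auto simp: push1_reduced reduced_append reduced_Cons split: if_splits)

lemma reduce_reduced: "reduced w \<Longrightarrow> reduce w = w"
  using push_all_reduced[of w "[]"] by (simp add: reduce_def)

lemma push1_push1_inv: "reduced w \<Longrightarrow> push1 a (push1 (inv1 a) w) = w"
  by (cases w) (auto simp: push1_reduced)

lemma push_all_push1: "reduced w \<Longrightarrow> push_all (push1 a t) w = push1 a (push_all t w)"
  by (cases t) (auto simp: push1_push1_inv reduced_push_all)

lemma push_all_reduce: "reduced w \<Longrightarrow> push_all (reduce u) w = push_all u w"
  by (induction u) (auto simp: reduce_def push_all_push1)

lemma reduce_Nil [simp]: "reduce [] = []"
  by (simp add: reduce_def)

lemma reduce_Cons: "reduce (a # u) = push1 a (reduce u)"
  by (simp add: reduce_def)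

lemma reduce_append: "reduce (u @ v) = push_all u (reduce v)"
  by (simp add: reduce_def)

lemma push_all_inv_word: "reduced w \<Longrightarrow> push_all (inv_word u) (push_all u w) = w"
  by (induction u arbitrary: w)
    (auto simp: inv_word_def push1_push1_inv[of _ "inv1 _", simplified] reduced_push_all)

lemma push_all_inv_word': "reduced w \<Longrightarrow> push_all u (push_all (inv_word u) w) = w"
  using push_all_inv_word[of w "inv_word u"] by simp

lemma reduce_reduce_left: "reduce (reduce u @ v) = reduce (u @ v)"
  by (simp add: reduce_append push_all_reduce reduced_reduce)

lemma reduce_reduce_right: "reduce (u @ reduce v) = reduce (u @ v)"
  by (simp add: reduce_append reduce_reduced reduced_reduce)

lemma reduce_cancel: "reduce (u @ inv_word u @ v) = reduce v"
  by (simp add: reduce_append push_all_inv_word' reduced_reduce)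

lemma reduce_inv_word_self: "reduce (inv_word u @ u) = []"
  using reduce_cancel[of "inv_word u" "[]"] by (simp add: reduce_def)

lemma free_grp_simps:
  "carrier free_grp = {w. reduced w}" "x \<otimes>\<^bsub>free_grp\<^esub> y = reduce (x @ y)" "\<one>\<^bsub>free_grp\<^esub> = []"
  by (simp_all add: free_grp_def)

lemma group_free_grp: "group free_grp"
proof (rule groupI)
  fix x y z :: "('a \<times> bool) list"
  show "x \<otimes>\<^bsub>free_grp\<^esub> y \<otimes>\<^bsub>free_grp\<^esub> z = x \<otimes>\<^bsub>free_grp\<^esub> (y \<otimes>\<^bsub>free_grp\<^esub> z)"
    by (simp add: free_grp_simps reduce_reduce_left reduce_reduce_right)
next
  fix x :: "('a \<times> bool) list"
  assume "x \<in> carrier free_grp"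
  then show "\<exists>y\<in>carrier free_grp. y \<otimes>\<^bsub>free_grp\<^esub> x = \<one>\<^bsub>free_grp\<^esub>"
    by (intro bexI[of _ "inv_word x"]) (simp_all add: free_grp_simps reduce_inv_word_self)
qed (simp_all add: free_grp_simps reduced_reduce reduce_reduced)

interpretation free_grp: group "free_grp :: ('a \<times> bool) list monoid"
  by (rule group_free_grp)

lemma free_grp_inv: "reduced x \<Longrightarrow> inv\<^bsub>free_grp\<^esub> x = inv_word x"
  by (intro free_grp.inv_equality) (simp_all add: free_grp_simps reduce_inv_word_self)

definition letter_pow :: "'a \<times> bool \<Rightarrow> int \<Rightarrow> ('a \<times> bool) list" where
  "letter_pow a k = (if k \<ge> 0 then replicate (nat k) a else replicate (nat (-k)) (inv1 a))"

lemma fst_in_letter_pow: "l \<in> set (letter_pow a k) \<Longrightarrow> fst l = fst a"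
  by (auto simp: letter_pow_def split: if_splits)

lemma letter_pow_eq_iff [simp]: "letter_pow a s = letter_pow a t \<longleftrightarrow> s = t"
proof
  assume eq: "letter_pow a s = letter_pow a t"
  have len: "nat \<bar>s\<bar> = nat \<bar>t\<bar>"
    using arg_cong[OF eq, of length] by (simp add: letter_pow_def split: if_splits)
  have hd: "k \<noteq> 0 \<Longrightarrow> hd (letter_pow a k) = a \<longleftrightarrow> k > 0" for k
    by (auto simp: letter_pow_def hd_replicate)
  show "s = t"
  proof (cases "s = 0")
    case True then show ?thesis using len by simp
  next
    case False
    then have "t \<noteq> 0" using len by auto
    then show ?thesis using False len hd[of s] hd[of t] eq by (auto simp: abs_if split: if_splits)
  qed
qed simp

lemma reduced_letter_pow: "reduced (letter_pow a k)"
  by (simp add: letter_pow_def reduced_replicate)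

lemma inv_word_letter_pow: "inv_word (letter_pow a k) = letter_pow a (-k)"
  by (auto simp: letter_pow_def inv_word_replicate)

lemma free_grp_pow_single: "[a] [^]\<^bsub>free_grp\<^esub> (k::int) = letter_pow a k"
proof -
  have "[a] [^]\<^bsub>free_grp\<^esub> (n::nat) = replicate n a" for n
  proof (induction n)
    case (Suc n)
    then show ?case
      using reduce_reduced[OF reduced_replicate[of "Suc n"]]
      by (simp add: free_grp_simps replicate_append_same)
  qed (simp add: free_grp_simps)
  then show ?thesis
    by (simp add: int_pow_def2 letter_pow_def free_grp_inv reduced_replicate inv_word_replicate)
qed

lemma inv_letter_eq_inv1: "inv_letter = inv1"
  by (rule ext) (simp add: inv_letter_def inv1_def)

lemma reduced_word_eq_reduced: "reduced_word = reduced"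
proof
  show "reduced_word w = reduced w" for w
    by (induction w rule: reduced_word.induct) (auto simp: inv_letter_eq_inv1)
qed

lemma push_letter_eq_push1: "push_letter = push1"
proof (intro ext)
  show "push_letter a w = push1 a w" for a w
    by (cases w) (auto simp: inv_letter_eq_inv1)
qed

lemma F2_eq_free_grp: "F2 = free_grp"
  by (simp add: F2_def free_grp_def reduced_word_eq_reduced normalize_def reduce_def
      push_letter_eq_push1)

interpretation F2: group F2
  unfolding F2_eq_free_grp by (rule group_free_grp)

lemma F2_simps:
  "carrier F2 = {w. reduced w}" "x \<otimes>\<^bsub>F2\<^esub> y = reduce (x @ y)" "\<one>\<^bsub>F2\<^esub> = []"
  by (simp_all add: F2_eq_free_grp free_grp_simps)

lemma F2_inv: "reduced x \<Longrightarrow> inv\<^bsub>F2\<^esub> x = inv_word x"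
  by (simp add: F2_eq_free_grp free_grp_inv)

lemma gen_x_pow: "gen_x [^]\<^bsub>F2\<^esub> (k::int) = letter_pow (False, False) k"
  and gen_y_pow: "gen_y [^]\<^bsub>F2\<^esub> (k::int) = letter_pow (True, False) k"
  by (simp_all add: gen_x_def gen_y_def F2_eq_free_grp free_grp_pow_single)

lemma gen_x_carrier: "gen_x \<in> carrier F2" and gen_y_carrier: "gen_y \<in> carrier F2"
  by (simp_all add: F2_simps gen_x_def gen_y_def)

lemma wnm_eq_reduce:
  "wnm n m = reduce (letter_pow (False, False) n @ letter_pow (True, False) m
                     @ letter_pow (False, False) (-n) @ letter_pow (True, False) (-m))"
  by (simp add: wnm_def comm_def gen_x_pow gen_y_pow F2_simps F2_inv reduced_letter_pow
      reduced_reduce inv_word_letter_pow reduce_reduce_left)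

definition letter_exp :: "letter \<Rightarrow> int \<times> int" where
  "letter_exp l = (let s = (if snd l then -1 else 1) in if fst l then (0, s) else (s, 0))"

definition exp_sum :: "letter list \<Rightarrow> int \<times> int" where
  "exp_sum u = sum_list (map letter_exp u)"

lemma letter_exp_inv1 [simp]: "letter_exp (inv1 a) = - letter_exp a"
  by (cases a) (auto simp: letter_exp_def inv1_def)

lemma exp_sum_simps [simp]:
  "exp_sum [] = 0" "exp_sum (a # u) = letter_exp a + exp_sum u"
  "exp_sum (u @ v) = exp_sum u + exp_sum v"
  by (simp_all add: exp_sum_def)

lemma exp_sum_reduce [simp]: "exp_sum (reduce u) = exp_sum u"
proof -
  have "exp_sum (push1 a w) = letter_exp a + exp_sum w" for a w
    by (cases w) auto
  then show ?thesis
    by (induction u) (auto simp: reduce_def)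
qed

lemma exp_sum_letter_pow:
  "exp_sum (letter_pow (False, False) k) = (k, 0)"
  "exp_sum (letter_pow (True, False) k) = (0, k)"
proof -
  have "exp_sum (replicate n a) = (int n * fst (letter_exp a), int n * snd (letter_exp a))" for n a
    by (induction n) (simp_all add: algebra_simps zero_prod_def plus_prod_def)
  then show "exp_sum (letter_pow (False, False) k) = (k, 0)" "exp_sum (letter_pow (True, False) k) = (0, k)"
    by (auto simp: letter_pow_def letter_exp_def inv1_def)
qed

lemma exp_sum_mult: "exp_sum (u \<otimes>\<^bsub>F2\<^esub> v) = exp_sum u + exp_sum v"
  by (simp add: F2_simps)

lemma exp_sum_inv_word: "exp_sum (inv_word u) = - exp_sum u"
  by (induction u) (simp_all add: inv_word_def)

lemma exp_sum_inv: "u \<in> carrier F2 \<Longrightarrow> exp_sum (inv\<^bsub>F2\<^esub> u) = - exp_sum u"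
  by (simp add: F2_simps F2_inv exp_sum_inv_word)

definition abel_kernel :: "letter list set" where
  "abel_kernel = {u \<in> carrier F2. exp_sum u = 0}"

lemma subgroup_abel_kernel: "subgroup abel_kernel F2"
  by unfold_locales
    (auto simp: abel_kernel_def F2_simps F2_inv reduced_reduce exp_sum_inv_word)

lemma F_1_subset_abel_kernel: "F_1 \<subseteq> abel_kernel"
  unfolding F_1_def derived_def
  by (rule F2.generate_subgroup_incl[OF _ subgroup_abel_kernel])
    (auto simp: abel_kernel_def exp_sum_mult exp_sum_inv)

lemma wnm_in_abel_kernel: "wnm n m \<in> abel_kernel"
  by (simp add: abel_kernel_def F2_simps wnm_eq_reduce reduced_reduce exp_sum_letter_pow
      zero_prod_def)

section \<open>Rewriting the kernel into the free group on the lattice\<close>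

definition lattice_gen :: "int \<times> int \<Rightarrow> ((int \<times> int) \<times> bool) list" where
  "lattice_gen q = (if fst q = 0 \<or> snd q = 0 then [] else [(q, False)])"

text \<open>A word is read as a lattice path starting at \<open>q\<close>; the \<open>x\<close>-edge from \<open>q\<close> to \<open>q'\<close>
  is labelled \<open>g\<^sub>q\<^sup>-\<^sup>1 g\<^sub>q\<^sub>'\<close>, a \<open>y\<close>-edge is unlabelled, and the generators \<open>g\<^sub>q\<close> on the axes
  are trivial. Labels multiply correctly only along closed paths, i.e. on the abelianization
  kernel.\<close>
definition edge_word :: "int \<times> int \<Rightarrow> letter \<Rightarrow> ((int \<times> int) \<times> bool) list" where
  "edge_word q l = (if fst l then [] else inv_word (lattice_gen q) @ lattice_gen (q + letter_exp l))"

fun path_word :: "int \<times> int \<Rightarrow> letter list \<Rightarrow> ((int \<times> int) \<times> bool) list" where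
  "path_word q [] = []"
| "path_word q (l # u) = edge_word q l @ path_word (q + letter_exp l) u"

definition rewrite :: "letter list \<Rightarrow> ((int \<times> int) \<times> bool) list" where
  "rewrite u = reduce (path_word 0 u)"

lemma path_word_append: "path_word q (u @ v) = path_word q u @ path_word (q + exp_sum u) v"
  by (induction u arbitrary: q) (auto simp: add.assoc)

lemma edge_word_inv1: "edge_word (q + letter_exp a) (inv1 a) = inv_word (edge_word q a)"
  by (simp add: edge_word_def inv_word_append)

lemma reduce_path_word_push1:
  assumes "reduced w"
  shows "reduce (path_word q (push1 a w)) = reduce (edge_word q a @ path_word (q + letter_exp a) w)"
proof (cases w)
  case (Cons b w')
  then show ?thesis
    by (cases "b = inv1 a") (auto simp: edge_word_inv1 reduce_cancel)
qed simp

lemma reduce_path_word_reduce: "reduce (path_word q (reduce u)) = reduce (path_word q u)"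
proof (induction u arbitrary: q)
  case (Cons a u)
  have "reduce (path_word q (reduce (a # u)))
      = reduce (edge_word q a @ path_word (q + letter_exp a) (reduce u))"
    by (simp add: reduce_Cons reduce_path_word_push1 reduced_reduce)
  also have "\<dots> = reduce (path_word q (a # u))"
    using Cons by (simp add: reduce_append)
  finally show ?case .
qed (simp add: reduce_def)

lemma rewrite_mult:
  assumes "exp_sum u = 0"
  shows "rewrite (u \<otimes>\<^bsub>F2\<^esub> v) = rewrite u \<otimes>\<^bsub>free_grp\<^esub> rewrite v"
  using assms
  by (simp add: rewrite_def F2_simps free_grp_simps reduce_path_word_reduce path_word_append
      reduce_reduce_left reduce_reduce_right)

lemma rewrite_hom: "rewrite \<in> hom (F2\<lparr>carrier := abel_kernel\<rparr>) free_grp"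
proof (rule homI)
  show "rewrite u \<in> carrier free_grp" for u
    by (simp add: rewrite_def free_grp_simps reduced_reduce)
  show "rewrite (u \<otimes>\<^bsub>F2\<lparr>carrier := abel_kernel\<rparr>\<^esub> v) = rewrite u \<otimes>\<^bsub>free_grp\<^esub> rewrite v"
    if "u \<in> carrier (F2\<lparr>carrier := abel_kernel\<rparr>)" for u v
    using that by (simp add: abel_kernel_def rewrite_mult)
qed

lemma rewrite_pow: "u \<in> abel_kernel \<Longrightarrow> rewrite (u [^]\<^bsub>F2\<^esub> (k::int)) = rewrite u [^]\<^bsub>free_grp\<^esub> k"
  using hom_int_pow[OF rewrite_hom _ subgroup.subgroup_is_group[OF subgroup_abel_kernel]]
    F2.int_pow_consistent[OF subgroup_abel_kernel]
  by simp

lemma reduce_path_word_x_letters: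
  "\<forall>l \<in> set u. \<not> fst l \<Longrightarrow>
     reduce (path_word q u) = reduce (inv_word (lattice_gen q) @ lattice_gen (q + exp_sum u))"
proof (induction u arbitrary: q)
  case (Cons l u)
  then show ?case
    by (simp add: edge_word_def reduce_append inv_word_append push_all_inv_word' reduced_reduce
        add.assoc)
qed (simp add: reduce_inv_word_self)

lemma path_word_y_letters: "\<forall>l \<in> set u. fst l \<Longrightarrow> path_word q u = []"
  by (induction u arbitrary: q) (auto simp: edge_word_def)

lemma rewrite_wnm:
  assumes "n \<noteq> 0" "m \<noteq> 0"
  shows "rewrite (wnm n m) = [((n, m), True)]"
proof -
  have x: "\<forall>l \<in> set (letter_pow (False, False) k). \<not> fst l"
    and y: "\<forall>l \<in> set (letter_pow (True, False) k). fst l" for k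
    using fst_in_letter_pow by fastforce+
  have "rewrite (wnm n m) = reduce (path_word 0 (letter_pow (False, False) n)
                                   @ path_word (n, m) (letter_pow (False, False) (-n)))"
    by (simp add: rewrite_def wnm_eq_reduce reduce_path_word_reduce path_word_append
        exp_sum_letter_pow path_word_y_letters[OF y] zero_prod_def)
  also have "\<dots> = reduce (reduce (path_word 0 (letter_pow (False, False) n))
                       @ reduce (path_word (n, m) (letter_pow (False, False) (-n))))"
    by (simp only: reduce_reduce_left reduce_reduce_right)
  also have "\<dots> = [((n, m), True)]"
    using assms
    by (simp add: reduce_path_word_x_letters[OF x] exp_sum_letter_pow lattice_gen_def
        inv_word_def inv1_def reduce_reduced zero_prod_def)
  finally show ?thesis .
qed

section \<open>Reduced expressions in the generators \<open>w\<^sub>n\<^sub>,\<^sub>m\<close>\<close>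

lemma eval_expr_Nil [simp]: "eval_expr [] = \<one>\<^bsub>F2\<^esub>"
  by (simp add: eval_expr_def)

lemma eval_expr_Cons [simp]:
  "eval_expr (((n, m), s) # es) = wnm n m [^]\<^bsub>F2\<^esub> s \<otimes>\<^bsub>F2\<^esub> eval_expr es"
  by (simp add: eval_expr_def)

lemma eval_expr_in_subgroup:
  assumes "subgroup H F2" "\<And>n m. wnm n m \<in> H"
  shows "eval_expr es \<in> H"
proof (induction es)
  case (Cons e es)
  then show ?case
    using assms subgroup.m_closed F2.subgroup_int_pow_closed by (cases e) fastforce
qed (simp add: assms subgroup.one_closed)

lemma eval_expr_in_abel_kernel: "eval_expr es \<in> abel_kernel"
  by (rule eval_expr_in_subgroup[OF subgroup_abel_kernel wnm_in_abel_kernel])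

lemma wnm_carrier [simp]: "wnm n m \<in> carrier F2"
  using subgroup.subset[OF subgroup_abel_kernel] wnm_in_abel_kernel by blast

lemma eval_expr_carrier [simp]: "eval_expr es \<in> carrier F2"
  using subgroup.subset[OF subgroup_abel_kernel] eval_expr_in_abel_kernel by blast

lemma eval_expr_append: "eval_expr (es @ fs) = eval_expr es \<otimes>\<^bsub>F2\<^esub> eval_expr fs"
  by (induction es) (auto simp: F2.m_assoc)

lemma reduced_expr_Cons:
  "reduced_expr (((n, m), s) # es) \<longleftrightarrow>
     n \<noteq> 0 \<and> m \<noteq> 0 \<and> s \<noteq> 0 \<and> reduced_expr es \<and> (es = [] \<or> fst (hd es) \<noteq> (n, m))"
  by (cases es) (auto simp: reduced_expr_def)

definition expr_word :: "expr \<Rightarrow> ((int \<times> int) \<times> bool) list" where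
  "expr_word es = concat (map (\<lambda>(p, s). letter_pow (p, True) s) es)"

lemma expr_word_simps [simp]:
  "expr_word [] = []" "expr_word ((p, s) # es) = letter_pow (p, True) s @ expr_word es"
  by (simp_all add: expr_word_def)

lemma expr_word_reduced:
  assumes "reduced_expr es"
  shows "reduced (expr_word es) \<and> (es \<noteq> [] \<longrightarrow> expr_word es \<noteq> [] \<and> fst (hd (expr_word es)) = fst (hd es))"
  using assms
proof (induction es)
  case (Cons e es)
  obtain n m s where e: "e = ((n, m), s)" by (metis prod.exhaust)
  have ne: "letter_pow ((n, m), True) s \<noteq> []"
    using Cons.prems e by (simp add: reduced_expr_Cons letter_pow_def)
  then have "fst (hd (letter_pow ((n, m), True) s)) = (n, m)"
    "fst (last (letter_pow ((n, m), True) s)) = (n, m)"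
    using fst_in_letter_pow[OF hd_in_set[OF ne]] fst_in_letter_pow[OF last_in_set[OF ne]] by simp_all
  then show ?case
    using Cons e ne by (auto simp: reduced_expr_Cons reduced_append reduced_letter_pow)
qed simp

lemma takeWhile_expr_word:
  assumes "reduced_expr ((p, s) # es)"
  shows "takeWhile (\<lambda>l. fst l = p) (expr_word ((p, s) # es)) = letter_pow (p, True) s"
    and "dropWhile (\<lambda>l. fst l = p) (expr_word ((p, s) # es)) = expr_word es"
proof -
  have "expr_word es = [] \<or> fst (hd (expr_word es)) \<noteq> p"
    using assms expr_word_reduced[of es] by (cases p) (auto simp: reduced_expr_Cons)
  moreover have "\<forall>l \<in> set (letter_pow (p, True) s). fst l = p"
    using fst_in_letter_pow by fastforce
  ultimately show "takeWhile (\<lambda>l. fst l = p) (expr_word ((p, s) # es)) = letter_pow (p, True) s"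
    and "dropWhile (\<lambda>l. fst l = p) (expr_word ((p, s) # es)) = expr_word es"
    by (cases "expr_word es"; simp add: takeWhile_append2 dropWhile_append2)+
qed

lemma expr_word_inj:
  "reduced_expr es \<Longrightarrow> reduced_expr fs \<Longrightarrow> expr_word es = expr_word fs \<Longrightarrow> es = fs"
proof (induction es arbitrary: fs)
  case Nil
  then show ?case using expr_word_reduced[of fs] by auto
next
  case (Cons e es)
  obtain n m s where e: "e = ((n, m), s)" by (metis prod.exhaust)
  obtain q t fs' where fs: "fs = (q, t) # fs'"
    using Cons.prems expr_word_reduced[of "e # es"] by (cases fs) auto
  have "q = (n, m)"
    using Cons.prems expr_word_reduced[of "e # es"] expr_word_reduced[of fs] e fs by auto
  then have red: "reduced_expr (((n, m), s) # es)" "reduced_expr (((n, m), t) # fs')"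
    using Cons.prems e fs by simp_all
  have eq: "expr_word (((n, m), s) # es) = expr_word (((n, m), t) # fs')"
    using Cons.prems(3) e fs \<open>q = (n, m)\<close> by simp
  have "letter_pow ((n, m), True) s = letter_pow ((n, m), True) t"
    using takeWhile_expr_word(1)[OF red(1)] takeWhile_expr_word(1)[OF red(2)] by (simp only: eq)
  then have "s = t"
    by simp
  have "expr_word es = expr_word fs'"
    using takeWhile_expr_word(2)[OF red(1)] takeWhile_expr_word(2)[OF red(2)] by (simp only: eq)
  moreover have "reduced_expr es" "reduced_expr fs'"
    using red by (simp_all add: reduced_expr_Cons)
  ultimately have "es = fs'"
    using Cons.IH by blast
  with \<open>s = t\<close> show ?case
    using e fs \<open>q = (n, m)\<close> by simp
qed

lemma rewrite_eval_expr: "reduced_expr es \<Longrightarrow> rewrite (eval_expr es) = expr_word es"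
proof (induction es)
  case Nil
  then show ?case by (simp add: rewrite_def F2_simps)
next
  case (Cons e es)
  obtain n m s where e: "e = ((n, m), s)" by (metis prod.exhaust)
  have "rewrite (wnm n m [^]\<^bsub>F2\<^esub> s) = letter_pow ((n, m), True) s"
    using Cons.prems e
    by (simp add: rewrite_pow wnm_in_abel_kernel rewrite_wnm reduced_expr_Cons free_grp_pow_single)
  moreover have "exp_sum (wnm n m [^]\<^bsub>F2\<^esub> s) = 0"
    using F2.subgroup_int_pow_closed[OF subgroup_abel_kernel wnm_in_abel_kernel]
    by (simp add: abel_kernel_def)
  moreover have "rewrite (eval_expr es) = expr_word es"
    using Cons.IH Cons.prems e by (simp add: reduced_expr_Cons)
  ultimately have "rewrite (eval_expr (e # es)) = reduce (expr_word (e # es))"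
    using e by (simp add: rewrite_mult free_grp_simps)
  then show ?case
    using expr_word_reduced[OF Cons.prems] by (simp add: reduce_reduced)
qed

lemma reduced_expr_unique:
  "reduced_expr es \<Longrightarrow> reduced_expr fs \<Longrightarrow> eval_expr es = eval_expr fs \<Longrightarrow> es = fs"
  using expr_word_inj rewrite_eval_expr by metis

lemma (in group) mult_inv_cancel: "x \<in> carrier G \<Longrightarrow> y \<in> carrier G \<Longrightarrow> x \<otimes> (inv x \<otimes> y) = y"
  by (metis inv_closed m_assoc r_inv l_one)

lemma (in group) inv_mult_cancel: "x \<in> carrier G \<Longrightarrow> y \<in> carrier G \<Longrightarrow> inv x \<otimes> (x \<otimes> y) = y"
  by (metis inv_closed m_assoc l_inv l_one)

lemma (in group) commutator_shift:
  assumes "a \<in> carrier G" "e \<in> carrier G" "h \<in> carrier G"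
  shows "(a \<otimes> h \<otimes> inv a \<otimes> inv h) \<otimes> inv ((a \<otimes> e) \<otimes> h \<otimes> inv (a \<otimes> e) \<otimes> inv h) \<otimes> (a \<otimes> e) \<otimes> h
         = a \<otimes> h \<otimes> e"
  using assms by (simp add: m_assoc inv_mult_group mult_inv_cancel inv_mult_cancel)

lemma x_pow_y_pow_x_pow:
  "gen_x [^]\<^bsub>F2\<^esub> a \<otimes>\<^bsub>F2\<^esub> gen_y [^]\<^bsub>F2\<^esub> b \<otimes>\<^bsub>F2\<^esub> gen_x [^]\<^bsub>F2\<^esub> (e::int)
   = eval_expr [((a, b), 1), ((a + e, b), -1)] \<otimes>\<^bsub>F2\<^esub> gen_x [^]\<^bsub>F2\<^esub> (a + e)
       \<otimes>\<^bsub>F2\<^esub> gen_y [^]\<^bsub>F2\<^esub> (b::int)"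
  using F2.commutator_shift[of "gen_x [^]\<^bsub>F2\<^esub> a" "gen_x [^]\<^bsub>F2\<^esub> e" "gen_y [^]\<^bsub>F2\<^esub> b"]
  by (simp add: gen_x_carrier gen_y_carrier F2.int_pow_mult F2.int_pow_neg wnm_def comm_def
      F2.m_assoc)

lemma single_letter_carrier: "[l] \<in> carrier F2"
  by (simp add: F2_simps)

lemma single_letter_cases:
  obtains e where "[l] = gen_x [^]\<^bsub>F2\<^esub> (e::int)" "letter_exp l = (e, 0)"
  | e where "[l] = gen_y [^]\<^bsub>F2\<^esub> (e::int)" "letter_exp l = (0, e)"
proof -
  obtain g i where l: "l = (g, i)" by (cases l)
  define e :: int where "e = (if i then -1 else 1)"
  have "[l] = letter_pow (g, False) e" "letter_exp l = (if g then (0, e) else (e, 0))"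
    by (simp_all add: l e_def letter_pow_def inv1_def letter_exp_def)
  then show ?thesis
    using that by (cases g) (simp_all add: gen_x_pow gen_y_pow)
qed

lemma reduce_eq_eval_expr_mult:
  "\<exists>es. reduce u = eval_expr es \<otimes>\<^bsub>F2\<^esub> gen_x [^]\<^bsub>F2\<^esub> fst (exp_sum u)
                    \<otimes>\<^bsub>F2\<^esub> gen_y [^]\<^bsub>F2\<^esub> snd (exp_sum u)"
proof (induction u rule: rev_induct)
  case Nil
  show ?case by (rule exI[of _ "[]"]) (simp add: F2_simps)
next
  case (snoc l u)
  obtain es where es: "reduce u = eval_expr es \<otimes>\<^bsub>F2\<^esub> gen_x [^]\<^bsub>F2\<^esub> fst (exp_sum u)
                                  \<otimes>\<^bsub>F2\<^esub> gen_y [^]\<^bsub>F2\<^esub> snd (exp_sum u)"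
    using snoc.IH by blast
  obtain a b where ab: "exp_sum u = (a, b)" by (cases "exp_sum u")
  have "reduce (u @ [l]) = reduce u \<otimes>\<^bsub>F2\<^esub> [l]"
    by (simp add: F2_simps reduce_reduce_left)
  also have "\<dots> = eval_expr es \<otimes>\<^bsub>F2\<^esub> (gen_x [^]\<^bsub>F2\<^esub> a \<otimes>\<^bsub>F2\<^esub> gen_y [^]\<^bsub>F2\<^esub> b \<otimes>\<^bsub>F2\<^esub> [l])"
    using es ab by (simp add: F2.m_assoc gen_x_carrier gen_y_carrier single_letter_carrier)
  finally have ul: "reduce (u @ [l]) = \<dots>" .
  show ?case
  proof (cases l rule: single_letter_cases)
    case (1 e)
    have "exp_sum (u @ [l]) = (a + e, b)"
      using 1(2) ab by (simp add: plus_prod_def)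
    then show ?thesis
      unfolding ul using 1(1)
      by (intro exI[of _ "es @ [((a, b), 1), ((a + e, b), -1)]"])
        (simp add: x_pow_y_pow_x_pow eval_expr_append F2.m_assoc gen_x_carrier gen_y_carrier)
  next
    case (2 e)
    have "exp_sum (u @ [l]) = (a, b + e)"
      using 2(2) ab by (simp add: plus_prod_def)
    then show ?thesis
      unfolding ul using 2(1)
      by (intro exI[of _ es]) (simp add: F2.int_pow_mult F2.m_assoc gen_x_carrier gen_y_carrier)
  qed
qed

definition expr_push :: "(int \<times> int) \<times> int \<Rightarrow> expr \<Rightarrow> expr" where
  "expr_push e es =
     (if fst (fst e) = 0 \<or> snd (fst e) = 0 \<or> snd e = 0 then es
      else case es of
        [] \<Rightarrow> [e]
      | f # fs \<Rightarrow>
          if fst f = fst e then (if snd e + snd f = 0 then fs else (fst e, snd e + snd f) # fs)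
          else e # f # fs)"

lemma wnm_zero [simp]: "wnm 0 m = \<one>\<^bsub>F2\<^esub>" "wnm n 0 = \<one>\<^bsub>F2\<^esub>"
  by (simp_all add: wnm_def comm_def gen_x_carrier gen_y_carrier)

lemma eval_expr_push: "eval_expr (expr_push e es) = eval_expr (e # es)"
proof -
  obtain n m s where e: "e = ((n, m), s)" by (metis prod.exhaust)
  have merge: "wnm n m [^]\<^bsub>F2\<^esub> s \<otimes>\<^bsub>F2\<^esub> (wnm n m [^]\<^bsub>F2\<^esub> t \<otimes>\<^bsub>F2\<^esub> eval_expr fs)
             = wnm n m [^]\<^bsub>F2\<^esub> (s + t) \<otimes>\<^bsub>F2\<^esub> eval_expr fs" for t fs
    by (simp add: F2.int_pow_mult F2.m_assoc)
  show ?thesis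
    using e merge by (auto simp: expr_push_def split: list.split)
qed

lemma reduced_expr_push: "reduced_expr es \<Longrightarrow> reduced_expr (expr_push e es)"
  by (cases e; cases es) (auto simp: expr_push_def reduced_expr_Cons)

lemma exists_reduced_expr:
  assumes "u \<in> abel_kernel"
  shows "\<exists>es. reduced_expr es \<and> eval_expr es = u"
proof -
  have u: "reduced u" "exp_sum u = 0"
    using assms by (simp_all add: abel_kernel_def F2_simps)
  obtain es where "u = eval_expr es"
    using reduce_eq_eval_expr_mult[of u] by (auto simp: u reduce_reduced zero_prod_def)
  moreover have "reduced_expr (foldr expr_push fs []) \<and> eval_expr (foldr expr_push fs []) = eval_expr fs"
    for fs
  proof (induction fs)
    case (Cons f fs)
    obtain n m s where "f = ((n, m), s)" by (metis prod.exhaust)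
    with Cons show ?case
      by (simp add: reduced_expr_push eval_expr_push)
  qed (simp add: reduced_expr_def)
  ultimately show ?thesis
    by blast
qed

lemma red_expr_of:
  assumes "u \<in> abel_kernel"
  shows "reduced_expr (red_expr_of u)" "eval_expr (red_expr_of u) = u"
proof -
  have "\<exists>!es. reduced_expr es \<and> eval_expr es = u"
    using exists_reduced_expr[OF assms] reduced_expr_unique by metis
  then show "reduced_expr (red_expr_of u)" "eval_expr (red_expr_of u) = u"
    unfolding red_expr_of_def by (metis (mono_tags, lifting) theI')+
qed

section \<open>Exponent sums and the second derived subgroup\<close>

lemma (in group) derived_mult_swap:
  assumes "H \<subseteq> carrier G" "a \<in> H" "b \<in> H" "z \<in> carrier G"
    and "b \<otimes> (a \<otimes> z) \<in> derived G H"
  shows "a \<otimes> (b \<otimes> z) \<in> derived G H"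
proof -
  have "a \<otimes> b \<otimes> inv a \<otimes> inv b \<in> derived G H"
    using assms(2,3) unfolding derived_def by (intro generate.incl) blast
  moreover have "a \<in> carrier G" "b \<in> carrier G"
    using assms(1-3) by auto
  then have "a \<otimes> (b \<otimes> z) = (a \<otimes> b \<otimes> inv a \<otimes> inv b) \<otimes> (b \<otimes> (a \<otimes> z))"
    using assms(4) by (simp add: m_assoc mult_inv_cancel inv_mult_cancel)
  ultimately show ?thesis
    using assms(5) subgroup.m_closed[OF derived_is_subgroup[OF assms(1)]] by simp
qed

lemma subgroup_F_1: "subgroup F_1 F2"
  unfolding F_1_def by (rule F2.derived_is_subgroup) simp

lemma F_1_carrier: "F_1 \<subseteq> carrier F2"
  using subgroup.subset[OF subgroup_F_1] .

lemma wnm_in_F_1: "wnm n m \<in> F_1"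
proof -
  have "gen_x [^]\<^bsub>F2\<^esub> n \<in> carrier F2" "gen_y [^]\<^bsub>F2\<^esub> m \<in> carrier F2"
    by (simp_all add: gen_x_carrier gen_y_carrier)
  then have "wnm n m \<in> derived_set F2 (carrier F2)"
    unfolding wnm_def comm_def by blast
  then show ?thesis
    unfolding F_1_def derived_def by (rule generate.incl)
qed

lemma eval_expr_in_F_1: "eval_expr es \<in> F_1"
  by (rule eval_expr_in_subgroup[OF subgroup_F_1 wnm_in_F_1])

definition expr_exp :: "expr \<Rightarrow> int \<times> int \<Rightarrow> int" where
  "expr_exp es p = sum_list (map snd (filter (\<lambda>e. fst e = p) es))"

lemma expr_exp_simps [simp]:
  "expr_exp [] q = 0"
  "expr_exp ((p, s) # es) q = (if p = q then s else 0) + expr_exp es q"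
  "expr_exp (es @ fs) q = expr_exp es q + expr_exp fs q"
  by (simp_all add: expr_exp_def)

lemma expr_exp_not_in: "p \<notin> fst ` set es \<Longrightarrow> expr_exp es p = 0"
  by (induction es) auto

lemma eval_expr_merge_in_F_2':
  assumes "eval_expr (r1 @ ((n, m), s + t) # r2) \<in> F_2'"
  shows "eval_expr (((n, m), s) # r1 @ ((n, m), t) # r2) \<in> F_2'"
proof -
  have "eval_expr (r1 @ ((n, m), s + t) # r2) = eval_expr r1 \<otimes>\<^bsub>F2\<^esub>
      (wnm n m [^]\<^bsub>F2\<^esub> s \<otimes>\<^bsub>F2\<^esub> (wnm n m [^]\<^bsub>F2\<^esub> t \<otimes>\<^bsub>F2\<^esub> eval_expr r2))"
    by (simp add: eval_expr_append F2.int_pow_mult F2.m_assoc)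
  moreover have "eval_expr (((n, m), s) # r1 @ ((n, m), t) # r2) = wnm n m [^]\<^bsub>F2\<^esub> s \<otimes>\<^bsub>F2\<^esub>
      (eval_expr r1 \<otimes>\<^bsub>F2\<^esub> (wnm n m [^]\<^bsub>F2\<^esub> t \<otimes>\<^bsub>F2\<^esub> eval_expr r2))"
    by (simp add: eval_expr_append)
  ultimately show ?thesis
    using assms unfolding F_2'_def
    by (auto intro!: F2.derived_mult_swap F_1_carrier eval_expr_in_F_1
        F2.subgroup_int_pow_closed[OF subgroup_F_1 wnm_in_F_1])
qed

text \<open>Induction on the length, merging the first factor into a later one with the same
  generator.\<close>
lemma eval_expr_in_F_2':
  assumes "\<And>p. expr_exp es p = 0"
  shows "eval_expr es \<in> F_2'"
  using assms
proof (induction "length es" arbitrary: es rule: less_induct)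
  case less
  show ?case
  proof (cases es)
    case Nil
    then show ?thesis
      using subgroup.one_closed[OF F2.derived_is_subgroup[OF F_1_carrier]] by (simp add: F_2'_def)
  next
    case (Cons e r)
    obtain n m s where e: "e = ((n, m), s)" by (metis prod.exhaust)
    show ?thesis
    proof (cases "s = 0")
      case True
      have "eval_expr r \<in> F_2'"
        using less.prems Cons e True by (intro less.hyps) (auto split: if_splits)
      then show ?thesis
        using Cons e True by simp
    next
      case False
      then have "expr_exp r (n, m) \<noteq> 0"
        using less.prems[of "(n, m)"] Cons e by simp
      then obtain t where "((n, m), t) \<in> set r"
        using expr_exp_not_in by force
      then obtain r1 r2 where r: "r = r1 @ ((n, m), t) # r2"
        by (meson split_list)
      define es' where "es' = r1 @ ((n, m), s + t) # r2"
      have "expr_exp es' p = expr_exp es p" for p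
        by (cases "p = (n, m)") (simp_all add: es'_def Cons e r)
      then have "eval_expr es' \<in> F_2'"
        using less.prems Cons r by (intro less.hyps) (simp_all add: es'_def)
      then show ?thesis
        unfolding Cons e r es'_def by (rule eval_expr_merge_in_F_2')
    qed
  qed
qed

lemma R_eq_expr_exp: "R w p = expr_exp (red_expr_of w) p"
  by (simp add: R_def expr_exp_def)

lemma finite_Supp: "finite (Supp w)"
  by (simp add: Supp_def)

lemma Supp_nonzero:
  assumes "w \<in> F_1" "(\<alpha>, \<beta>) \<in> Supp w"
  shows "\<alpha> \<noteq> 0" "\<beta> \<noteq> 0"
proof -
  have "reduced_expr (red_expr_of w)"
    using assms(1) F_1_subset_abel_kernel red_expr_of(1) by blast
  then show "\<alpha> \<noteq> 0" "\<beta> \<noteq> 0"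
    using assms(2) by (auto simp: Supp_def reduced_expr_def)
qed

lemma exists_R_nonzero:
  assumes "w \<in> F_1" "w \<notin> F_2'"
  obtains p where "p \<in> Supp w" "R w p \<noteq> 0"
proof -
  have "eval_expr (red_expr_of w) = w"
    using assms(1) F_1_subset_abel_kernel red_expr_of(2) by blast
  then have "\<not> (\<forall>p. expr_exp (red_expr_of w) p = 0)"
    using eval_expr_in_F_2' assms(2) by metis
  then obtain p where "expr_exp (red_expr_of w) p \<noteq> 0"
    by blast
  moreover from this have "p \<in> Supp w"
    unfolding Supp_def using expr_exp_not_in by blast
  ultimately show ?thesis
    using that by (simp add: R_eq_expr_exp)
qed

section \<open>Laurent polynomials vanishing off a finite set\<close>

lemma poly_sum_coeff_eq_0:
  fixes b :: "'i \<Rightarrow> 'a :: real_normed_field" and e :: "'i \<Rightarrow> nat"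
  assumes "finite I" "finite A" "\<And>z. z \<notin> A \<Longrightarrow> (\<Sum>i\<in>I. b i * z ^ e i) = 0"
  shows "sum b {i \<in> I. e i = k} = 0"
proof -
  define n where "n = Max (insert k (e ` I))"
  define c where "c j = sum b {i \<in> I. e i = j}" for j
  have sum_eq: "(\<Sum>j\<le>n. c j * z ^ j) = (\<Sum>i\<in>I. b i * z ^ e i)" for z :: 'a
  proof -
    have "(\<Sum>j\<le>n. c j * z ^ j) = (\<Sum>j\<le>n. \<Sum>i \<in> {i \<in> I. e i = j}. b i * z ^ e i)"
      by (simp add: c_def sum_distrib_right)
    also have "\<dots> = (\<Sum>i\<in>I. b i * z ^ e i)"
      using assms(1) by (intro sum.group) (auto simp: n_def)
    finally show ?thesis .
  qed
  have "UNIV - A \<subseteq> {z. (\<Sum>j\<le>n. c j * z ^ j) = 0}"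
    using assms(3) sum_eq by auto
  then have "infinite {z. (\<Sum>j\<le>n. c j * z ^ j) = 0}"
    using assms(2) infinite_UNIV_char_0
    by (metis Diff_infinite_finite finite_subset)
  then have "c k = 0"
    using polyfun_finite_roots[of c n] assms(1) by (auto simp: n_def)
  then show ?thesis
    by (simp add: c_def)
qed

lemma laurent_sum_coeff_eq_0:
  fixes b :: "'i \<Rightarrow> 'a :: real_normed_field" and e :: "'i \<Rightarrow> int"
  assumes "finite I" "finite A" "\<And>z. z \<notin> A \<Longrightarrow> (\<Sum>i\<in>I. b i * z powi e i) = 0"
  shows "sum b {i \<in> I. e i = k} = 0"
proof -
  define N where "N = (\<Sum>i\<in>I. \<bar>e i\<bar>)"
  have N: "e i + N \<ge> 0" if "i \<in> I" for i
    using member_le_sum[OF that, of "\<lambda>i. \<bar>e i\<bar>"] assms(1) by (simp add: N_def)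
  have shifted: "sum b {i \<in> I. nat (e i + N) = nat (k + N)} = 0"
  proof (rule poly_sum_coeff_eq_0[OF assms(1), of "insert 0 A"])
    fix z :: 'a
    assume z: "z \<notin> insert 0 A"
    have "z ^ nat (e i + N) = z powi e i * z powi N" if "i \<in> I" for i
      using N[OF that] z by (simp add: power_int_add flip: power_int_of_nat)
    then have "(\<Sum>i\<in>I. b i * z ^ nat (e i + N)) = (\<Sum>i\<in>I. b i * z powi e i) * z powi N"
      by (simp add: sum_distrib_right mult.assoc)
    then show "(\<Sum>i\<in>I. b i * z ^ nat (e i + N)) = 0"
      using assms(3) z by simp
  qed (use assms(2) in simp)
  show ?thesis
  proof (cases "k + N \<ge> 0")
    case True
    then have "{i \<in> I. nat (e i + N) = nat (k + N)} = {i \<in> I. e i = k}"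
      using N by force
    with shifted show ?thesis
      by simp
  next
    case False
    then have "{i \<in> I. e i = k} = {}"
      using N by force
    then show ?thesis
      by (simp only: sum.empty)
  qed
qed

lemma sum_Times_UNIV_bool:
  "finite S \<Longrightarrow> (\<Sum>i\<in>S \<times> UNIV. f i) = (\<Sum>q\<in>S. f (q, True) + f (q, False))"
  using sum.cartesian_product[of "\<lambda>q t. f (q, t)" "UNIV :: bool set" S]
  by (simp add: UNIV_bool add.commute)

text \<open>Each term \<open>\<beta> q (z\<^bsup>\<epsilon> q\<^esup> - 1)\<close> is split into two monomials, indexed by \<open>S \<times> UNIV\<close>.\<close>
lemma laurent_minus_one_coeff_eq_0:
  fixes \<beta> :: "'i \<Rightarrow> 'a :: real_normed_field" and \<epsilon> :: "'i \<Rightarrow> int"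
  assumes "finite S" "finite A" "\<And>z. z \<notin> A \<Longrightarrow> (\<Sum>q\<in>S. \<beta> q * (z powi \<epsilon> q - 1)) = 0"
    and "k \<noteq> 0"
  shows "sum \<beta> {q \<in> S. \<epsilon> q = k} = 0"
proof -
  define b where "b i = (if snd i then \<beta> (fst i) else - \<beta> (fst i))" for i
  define e where "e i = (if snd i then \<epsilon> (fst i) else 0)" for i
  have "sum b {i \<in> S \<times> UNIV. e i = k} = 0"
  proof (rule laurent_sum_coeff_eq_0[of _ A])
    fix z assume "z \<notin> A"
    then show "(\<Sum>i\<in>S \<times> UNIV. b i * z powi e i) = 0"
      using assms(1,3) by (simp add: sum_Times_UNIV_bool b_def e_def algebra_simps)
  qed (use assms(1,2) in simp_all)
  moreover have "{i \<in> S \<times> UNIV. e i = k} = (\<lambda>q. (q, True)) ` {q \<in> S. \<epsilon> q = k}"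
    using assms(4) by (auto simp: e_def split: if_splits)
  ultimately show ?thesis
    by (simp add: b_def sum.reindex inj_on_def)
qed

lemma laurent2_nonzero:
  fixes c :: "int \<times> int \<Rightarrow> 'a :: real_normed_field"
  assumes "finite S" "\<And>a b. (a, b) \<in> S \<Longrightarrow> a \<noteq> 0 \<and> b \<noteq> 0" "p \<in> S" "c p \<noteq> 0"
  shows "\<exists>u v. u \<notin> {0, 1} \<and> v \<notin> {0, 1} \<and>
           (\<Sum>q\<in>S. c q * (u powi fst q - 1) * (v powi snd q - 1)) \<noteq> 0"
proof (rule ccontr)
  assume "\<not> ?thesis"
  then have G0: "(\<Sum>q\<in>S. c q * (u powi fst q - 1) * (v powi snd q - 1)) = 0"
    if "u \<notin> {0, 1}" "v \<notin> {0, 1}" for u v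
    using that by blast
  obtain a b where p: "p = (a, b)" by (cases p)
  have ab: "a \<noteq> 0" "b \<noteq> 0" using assms(2,3) p by auto
  define S' where "S' = {q \<in> S. snd q = b}"
  have "(\<Sum>q\<in>S'. c q * (u powi fst q - 1)) = 0" if "u \<notin> {0, 1}" for u
    unfolding S'_def using assms(1) G0[OF that] ab(2)
    by (intro laurent_minus_one_coeff_eq_0[of _ "{0, 1}"]) simp_all
  moreover have "finite S'"
    using assms(1) by (simp add: S'_def)
  ultimately have "sum c {q \<in> S'. fst q = a} = 0"
    using ab(1) laurent_minus_one_coeff_eq_0[of S' "{0, 1}" c fst a] by simp
  moreover have "{q \<in> S'. fst q = a} = {p}"
    using assms(3) p by (auto simp: S'_def prod_eq_iff)
  ultimately show False
    using assms(4) by simp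
qed

section \<open>\<open>\<Phi>\<^sub>w\<close> and \<open>\<Psi>\<^sub>w\<close> through one Laurent polynomial\<close>

lemma sgn_power_quotient:
  fixes x :: "'a :: field"
  assumes "x \<noteq> 0" "\<alpha> \<noteq> 0"
  shows "of_int (sgn \<alpha>) * ((x ^ (2 * nat \<bar>\<alpha>\<bar>) - 1) * x powi \<alpha>) / x ^ (nat \<bar>\<alpha>\<bar> - 1)
         = (x powi (2 * \<alpha>) - 1) * x"
proof -
  obtain n where n: "nat \<bar>\<alpha>\<bar> = Suc n"
    using assms(2) by (cases "nat \<bar>\<alpha>\<bar>") auto
  show ?thesis
  proof (cases "\<alpha> > 0")
    case True
    then have "\<alpha> = int (Suc n)" "2 * \<alpha> = int (2 * Suc n)"
      using n by simp_all
    then have pw: "x powi \<alpha> = x * x ^ n" "x powi (2 * \<alpha>) = x ^ (2 * Suc n)"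
      by (simp_all only: power_int_of_nat power_Suc)
    show ?thesis
      unfolding n pw using assms(1) True by simp
  next
    case False
    then have "\<alpha> = - int (Suc n)" "2 * \<alpha> = - int (2 * Suc n)"
      using n assms(2) by simp_all
    then have pw: "x powi \<alpha> = inverse (x * x ^ n)" "x powi (2 * \<alpha>) = inverse ((x * x ^ n)\<^sup>2)"
      by (simp_all only: power_int_minus power_int_of_nat power_Suc power_mult power2_eq_square
          mult.commute[of 2])
    have "x ^ (2 * Suc n) = (x * x ^ n)\<^sup>2"
      by (simp only: power_mult mult.commute[of 2] power_Suc)
    moreover have "of_int (sgn \<alpha>) * (((x * y)\<^sup>2 - 1) * inverse (x * y)) / y
        = (inverse ((x * y)\<^sup>2) - 1) * x" if "y \<noteq> 0" for y
      using assms False that by (simp add: divide_simps power2_eq_square algebra_simps)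
    ultimately show ?thesis
      unfolding n pw using assms(1) by simp
  qed
qed

lemma power_int_double: "x powi (2 * k) = (x\<^sup>2) powi k" for x :: "'a :: division_ring"
  by (simp add: power_int_mult)

lemma Phi_term:
  fixes x y c :: "'a :: field"
  assumes "x \<noteq> 0" "\<alpha> \<noteq> 0"
  shows "c * of_int (sgn \<alpha>) * (1 - y powi (2 * \<beta>)) *
           ((x ^ (2 * nat \<bar>\<alpha>\<bar>) - 1) * x powi \<alpha>) / (x ^ (nat \<bar>\<alpha>\<bar> - 1) * (x\<^sup>2 - 1))
         = - (x / (x\<^sup>2 - 1)) * (c * ((x\<^sup>2) powi \<alpha> - 1) * ((y\<^sup>2) powi \<beta> - 1))"
proof -
  have "c * of_int (sgn \<alpha>) * (1 - y powi (2 * \<beta>)) *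
           ((x ^ (2 * nat \<bar>\<alpha>\<bar>) - 1) * x powi \<alpha>) / (x ^ (nat \<bar>\<alpha>\<bar> - 1) * (x\<^sup>2 - 1))
      = c * (1 - y powi (2 * \<beta>)) *
          (of_int (sgn \<alpha>) * ((x ^ (2 * nat \<bar>\<alpha>\<bar>) - 1) * x powi \<alpha>) / x ^ (nat \<bar>\<alpha>\<bar> - 1))
          / (x\<^sup>2 - 1)"
    by (simp add: divide_inverse ac_simps)
  also have "\<dots> = c * (1 - y powi (2 * \<beta>)) * ((x powi (2 * \<alpha>) - 1) * x) / (x\<^sup>2 - 1)"
    by (simp only: sgn_power_quotient[OF assms])
  also have "\<dots> = - (x / (x\<^sup>2 - 1)) * (c * ((x\<^sup>2) powi \<alpha> - 1) * ((y\<^sup>2) powi \<beta> - 1))"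
    unfolding power_int_double by (simp add: divide_inverse algebra_simps)
  finally show ?thesis .
qed

lemma Psi_term:
  fixes x y c :: "'a :: field"
  assumes "y \<noteq> 0" "\<beta> \<noteq> 0"
  shows "c * of_int (sgn \<beta>) * (x powi (2 * \<alpha>) - 1) *
           ((y ^ (2 * nat \<bar>\<beta>\<bar>) - 1) * y powi \<beta>) / (y ^ (nat \<bar>\<beta>\<bar> - 1) * (y\<^sup>2 - 1))
         = (y / (y\<^sup>2 - 1)) * (c * ((x\<^sup>2) powi \<alpha> - 1) * ((y\<^sup>2) powi \<beta> - 1))"
proof -
  have "c * of_int (sgn \<beta>) * (x powi (2 * \<alpha>) - 1) *
           ((y ^ (2 * nat \<bar>\<beta>\<bar>) - 1) * y powi \<beta>) / (y ^ (nat \<bar>\<beta>\<bar> - 1) * (y\<^sup>2 - 1))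
      = c * (x powi (2 * \<alpha>) - 1) *
          (of_int (sgn \<beta>) * ((y ^ (2 * nat \<bar>\<beta>\<bar>) - 1) * y powi \<beta>) / y ^ (nat \<bar>\<beta>\<bar> - 1))
          / (y\<^sup>2 - 1)"
    by (simp add: divide_inverse ac_simps)
  also have "\<dots> = c * (x powi (2 * \<alpha>) - 1) * ((y powi (2 * \<beta>) - 1) * y) / (y\<^sup>2 - 1)"
    by (simp only: sgn_power_quotient[OF assms])
  also have "\<dots> = (y / (y\<^sup>2 - 1)) * (c * ((x\<^sup>2) powi \<alpha> - 1) * ((y\<^sup>2) powi \<beta> - 1))"
    unfolding power_int_double by (simp add: divide_inverse algebra_simps)
  finally show ?thesis .
qed

definition G_poly :: "letter list \<Rightarrow> complex \<Rightarrow> complex \<Rightarrow> complex" where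
  "G_poly w u v = (\<Sum>p\<in>Supp w. of_int (R w p) * (u powi fst p - 1) * (v powi snd p - 1))"

lemma Phi_eq_G_poly:
  assumes "w \<in> F_1" "la \<noteq> 0"
  shows "Phi w la mu = - (la / (la\<^sup>2 - 1)) * G_poly w (la\<^sup>2) (mu\<^sup>2)"
  unfolding Phi_def G_poly_def sum_distrib_left
  by (intro sum.cong refl, clarify)
    (simp only: prod.case fst_conv snd_conv Phi_term[OF assms(2) Supp_nonzero(1)[OF assms(1)]])

lemma Psi_eq_G_poly:
  assumes "w \<in> F_1" "mu \<noteq> 0"
  shows "Psi w la mu = (mu / (mu\<^sup>2 - 1)) * G_poly w (la\<^sup>2) (mu\<^sup>2)"
  unfolding Psi_def G_poly_def sum_distrib_left
  by (intro sum.cong refl, clarify)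
    (simp only: prod.case fst_conv snd_conv Psi_term[OF assms(2) Supp_nonzero(2)[OF assms(1)]])

lemma Phi_uminus: "w \<in> F_1 \<Longrightarrow> la \<noteq> 0 \<Longrightarrow> Phi w (- la) mu = - Phi w la mu"
  by (simp add: Phi_eq_G_poly)

lemma Psi_uminus: "w \<in> F_1 \<Longrightarrow> mu \<noteq> 0 \<Longrightarrow> Psi w (- la) mu = Psi w la mu"
  by (simp add: Psi_eq_G_poly)

lemma G_poly_nonzero:
  assumes "w \<in> F_1" "w \<notin> F_2'"
  obtains u v where "u \<notin> {0, 1}" "v \<notin> {0, 1}" "G_poly w u v \<noteq> 0"
proof -
  obtain p where p: "p \<in> Supp w" "R w p \<noteq> 0"
    using exists_R_nonzero assms by blast
  show ?thesis
    using laurent2_nonzero[OF finite_Supp _ p(1), of "\<lambda>p. complex_of_int (R w p)"] p(2)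
      Supp_nonzero[OF assms(1)] that unfolding G_poly_def by auto
qed

theorem proposition6p2:
  assumes "w \<in> F_1" and "w \<notin> F_2'"
  shows "(\<exists>la mu. good_pt la mu \<and> Phi w la mu \<noteq> 0)
       \<and> (\<exists>la mu. good_pt la mu \<and> Psi w la mu \<noteq> 0)
       \<and> (\<forall>a b :: complex. (\<forall>la mu. good_pt la mu \<longrightarrow> a * Phi w la mu + b * Psi w la mu = 0)
                            \<longrightarrow> a = 0 \<and> b = 0)"
proof -
  obtain u v where uv: "u \<notin> {0, 1}" "v \<notin> {0, 1}" "G_poly w u v \<noteq> 0"
    using G_poly_nonzero assms by blast
  define la where "la = csqrt u"
  define mu where "mu = csqrt v"
  have good: "good_pt la mu" "good_pt (- la) mu"
    using uv by (auto simp: good_pt_def la_def mu_def)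
  then have Phi: "Phi w la mu \<noteq> 0" "Phi w (- la) mu = - Phi w la mu"
    and Psi: "Psi w la mu \<noteq> 0" "Psi w (- la) mu = Psi w la mu"
    using uv assms(1)
    by (auto simp: Phi_eq_G_poly Psi_eq_G_poly Phi_uminus Psi_uminus good_pt_def la_def mu_def)
  have "a = 0 \<and> b = 0"
    if "\<forall>la mu. good_pt la mu \<longrightarrow> a * Phi w la mu + b * Psi w la mu = 0" for a b :: complex
  proof -
    have at_la: "a * Phi w la mu + b * Psi w la mu = 0"
      and at_minus_la: "a * Phi w (- la) mu + b * Psi w (- la) mu = 0"
      using that good by blast+
    have "2 * (a * Phi w la mu)
        = (a * Phi w la mu + b * Psi w la mu) - (a * Phi w (- la) mu + b * Psi w (- la) mu)"
      by (simp add: Phi(2) Psi(2) algebra_simps)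
    then have "a = 0"
      using at_la at_minus_la Phi(1) by simp
    then show ?thesis
      using at_la Psi(1) by simp
  qed
  then show ?thesis
    using good Phi(1) Psi(1) by blast
qed

end
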